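(* Let $(1,f_0,\dots,f_{d-1})$ be the $f$-vector of a simplicial complex. Then $\mu_{i+1}\big((i+2)f_i\big)\le (i+1)f_{i-1}$ for all $1\le i\le d-1$.
   Context: For positive integers $m,i$ let $m=\binom{a_i}{i}+\binom{a_{i-1}}{i-1}+\cdots+\binom{a_j}{j}$ with $a_i>\cdots>a_j\ge j\ge1$ be its unique $i$-th binomial expansion, and $\mu_i(m)=\binom{a_i}{i-1}+\binom{a_{i-1}}{i-2}+\cdots+\binom{a_j}{j-1}$; set $\mu_i(0)=0$. The $f$-vector of a simplicial complex is $(f_{-1},f_0,\dots)$ with $f_i$ the number of faces of cardinality $i+1$, $f_{-1}=1$. *)

theory Defs
  imports Main
begin

definition simplicial_complex :: "'a set set \<Rightarrow> bool" where
  "simplicial_complex K \<longleftrightarrow> finite K \<and> {} \<in> K \<and> (\<forall>F\<in>K. finite F) \<and>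
     (\<forall>F\<in>K. \<forall>G. G \<subseteq> F \<longrightarrow> G \<in> K)"

definition fvec :: "'a set set \<Rightarrow> int \<Rightarrow> nat" where
  "fvec K i = card {F \<in> K. int (card F) = i + 1}"

definition binom_expansion :: "nat \<Rightarrow> nat \<Rightarrow> nat \<Rightarrow> (nat \<Rightarrow> nat) \<Rightarrow> bool" where
  "binom_expansion i m j a \<longleftrightarrow> 1 \<le> j \<and> j \<le> i \<and> j \<le> a j \<and>
     (\<forall>k\<in>{j..<i}. a k < a (Suc k)) \<and> m = (\<Sum>k=j..i. a k choose k)"

definition mu :: "nat \<Rightarrow> nat \<Rightarrow> nat" where
  "mu i m = (if m = 0 then 0 else
     (THE s. \<exists>j a. binom_expansion i m j a \<and> s = (\<Sum>k=j..i. a k choose (k - 1))))"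

end

(* Mark at most one vertex of each i-face of K, encoding a marked face as a set
   of (vertex, flag) pairs of the same size.  This gives (i + 2) f_i distinct
   (i + 1)-sets, and deleting a vertex from a marked i-face leaves a marked
   (i - 1)-face, so their shadow has at most (i + 1) f_(i-1) members.  The
   Kruskal-Katona theorem (by shifting and induction on the ground set, with
   mu computed greedily from the binomial expansion) bounds that shadow from
   below by mu_(i+1) ((i + 2) f_i). *)
theory Submission
  imports Defs
begin

section \<open>The Kruskal--Katona function\<close>

lemma less_add_choose: "1 \<le> k \<Longrightarrow> m < (m + k) choose k"
proof (induction m)
  case 0
  then show ?case by simp
next
  case (Suc m)
  obtain k' where k: "k = Suc k'" using Suc.prems by (cases k) auto
  have "Suc m + k choose k = (m + k choose k') + (m + k choose k)"
    using k by simp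
  moreover have "1 \<le> (m + k choose k')" using k by (simp add: Suc_le_eq)
  ultimately show ?case using Suc by linarith
qed

text \<open>The leading binomial of the \<open>k\<close>-th binomial expansion of \<open>m\<close>:
  the largest \<open>a\<close> with \<open>a choose k \<le> m\<close>.\<close>
definition cascade_top :: "nat \<Rightarrow> nat \<Rightarrow> nat" where
  "cascade_top k m = (LEAST a. m < (Suc a choose k))"

lemma cascade_top_bounds:
  assumes "1 \<le> k"
  shows "(cascade_top k m choose k) \<le> m" "m < (Suc (cascade_top k m) choose k)"
proof -
  have "m < (Suc (m + k - 1) choose k)" using less_add_choose[OF assms, of m] assms by simp
  then show "m < (Suc (cascade_top k m) choose k)"
    unfolding cascade_top_def by (rule LeastI)
  show "(cascade_top k m choose k) \<le> m"
  proof (cases "cascade_top k m")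
    case 0
    then show ?thesis using assms by (cases k) auto
  next
    case (Suc b)
    then have "b < (LEAST a. m < (Suc a choose k))" unfolding cascade_top_def by simp
    then have "\<not> m < (Suc b choose k)" by (rule not_less_Least)
    then show ?thesis using Suc by simp
  qed
qed

lemma cascade_top_eqI:
  assumes "(a choose k) \<le> m" "m < (Suc a choose k)"
  shows "cascade_top k m = a"
  unfolding cascade_top_def
proof (rule Least_equality)
  fix b assume b: "m < (Suc b choose k)"
  show "a \<le> b"
  proof (rule ccontr)
    assume "\<not> a \<le> b"
    then have "(Suc b choose k) \<le> (a choose k)" by (simp add: binomial_right_mono)
    then show False using b assms by simp
  qed
qed fact

lemma cascade_top_cases:
  assumes "0 < m"
  obtains r where "m = (cascade_top (Suc k) m choose Suc k) + r"
    "r < (cascade_top (Suc k) m choose k)" "Suc k \<le> cascade_top (Suc k) m"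
proof -
  define a where "a = cascade_top (Suc k) m"
  have bounds: "(a choose Suc k) \<le> m" "m < (Suc a choose Suc k)"
    using cascade_top_bounds[of "Suc k" m] a_def by auto
  define r where "r = m - (a choose Suc k)"
  have m: "m = (a choose Suc k) + r" using bounds r_def by simp
  have "Suc k \<le> a"
  proof (rule ccontr)
    assume "\<not> Suc k \<le> a"
    then have "a choose Suc k = 0" "Suc a choose Suc k \<le> 1"
      by (simp, cases "a = k", simp_all add: binomial_eq_0)
    then show False using bounds assms by simp
  qed
  moreover have "r < (a choose k)" using bounds m by simp
  ultimately show ?thesis using that[of r] m unfolding a_def by blast
qed

text \<open>\<open>kk k m\<close> is \<open>\<mu>\<^sub>k(m)\<close>, computed greedily: peel off the leading binomial
  \<open>a choose k\<close> of \<open>m\<close>, contribute \<open>a choose (k - 1)\<close> and recurse on the remainder.\<close>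
fun kk :: "nat \<Rightarrow> nat \<Rightarrow> nat" where
  "kk 0 m = 0"
| "kk (Suc k) m = (if m = 0 then 0 else
     (cascade_top (Suc k) m choose k) + kk k (m - (cascade_top (Suc k) m choose Suc k)))"

lemma kk_0_right [simp]: "kk k 0 = 0"
  by (cases k) auto

lemma kk_Suc_binomial_add:
  assumes "r < (a choose k)" "0 < (a choose Suc k) + r"
  shows "kk (Suc k) ((a choose Suc k) + r) = (a choose k) + kk k r"
proof -
  have "cascade_top (Suc k) ((a choose Suc k) + r) = a"
    by (rule cascade_top_eqI) (use assms(1) in simp_all)
  moreover have "(a choose Suc k) + r \<noteq> 0" using assms(2) by linarith
  ultimately show ?thesis by (simp only: kk.simps if_False add_diff_cancel_left')
qed

lemma kk_Suc_cases:
  assumes "0 < m"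
  obtains a r where "m = (a choose Suc k) + r" "r < (a choose k)" "Suc k \<le> a"
    "kk (Suc k) m = (a choose k) + kk k r"
proof -
  obtain r where m: "m = (cascade_top (Suc k) m choose Suc k) + r"
    and "r < (cascade_top (Suc k) m choose k)" "Suc k \<le> cascade_top (Suc k) m"
    using cascade_top_cases[OF assms] .
  moreover have "m - (cascade_top (Suc k) m choose Suc k) = r" using m by linarith
  then have "kk (Suc k) m = (cascade_top (Suc k) m choose k) + kk k r"
    using assms by simp
  ultimately show ?thesis using that by blast
qed

lemma kk_le_kk_Suc: "kk k m \<le> kk k (Suc m)"
proof (induction k arbitrary: m)
  case 0
  then show ?case by simp
next
  case (Suc k)
  have mono_k: "x \<le> y \<Longrightarrow> kk k x \<le> kk k y" for x y
    using Suc.IH by (metis lift_Suc_mono_le)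
  show ?case
  proof (cases "m = 0")
    case False
    then obtain a r where m: "m = (a choose Suc k) + r" and r: "r < (a choose k)"
      and a: "Suc k \<le> a" and kk_m: "kk (Suc k) m = (a choose k) + kk k r"
      using kk_Suc_cases[of m k] by auto
    show ?thesis
    proof (cases "Suc r < (a choose k)")
      case True
      have "kk (Suc k) (Suc m) = (a choose k) + kk k (Suc r)"
        using kk_Suc_binomial_add[OF True] m by simp
      then show ?thesis using kk_m Suc.IH[of r] by simp
    next
      case False
      then have "Suc m = (Suc a choose Suc k) + 0" using m r by simp
      then have kk_Suc_m: "kk (Suc k) (Suc m) = (Suc a choose k)"
        using kk_Suc_binomial_add[of 0 "Suc a" k] a by simp
      show ?thesis
      proof (cases k)
        case 0
        then show ?thesis using kk_m kk_Suc_m by simp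
      next
        case (Suc k')
        have "kk k r \<le> kk k (a choose k)" using mono_k r by simp
        also have "kk k (a choose k) = (a choose k')"
          using kk_Suc_binomial_add[of 0 a k'] Suc a by simp
        finally show ?thesis using kk_m kk_Suc_m Suc by simp
      qed
    qed
  qed simp
qed

lemma kk_mono: "x \<le> y \<Longrightarrow> kk k x \<le> kk k y"
  by (metis kk_le_kk_Suc lift_Suc_mono_le)

text \<open>\<open>cascade_raise (Suc k) y\<close> raises every binomial \<open>b choose k\<close> of the
  \<open>k\<close>-th binomial expansion of \<open>y\<close> to \<open>b choose Suc k\<close>.\<close>
fun cascade_raise :: "nat \<Rightarrow> nat \<Rightarrow> nat" where
  "cascade_raise 0 y = 0"
| "cascade_raise (Suc 0) y = 0"
| "cascade_raise (Suc (Suc k)) y = (if y = 0 then 0 else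
     (cascade_top (Suc k) y choose Suc (Suc k)) +
       cascade_raise (Suc k) (y - (cascade_top (Suc k) y choose Suc k)))"

lemma cascade_raise_0_right [simp]: "cascade_raise k 0 = 0"
  by (cases "(k, 0::nat)" rule: cascade_raise.cases) auto

lemma cascade_raise_Suc_Suc:
  assumes "0 < y"
  obtains b y' where "y = (b choose Suc k) + y'" "y' < (b choose k)" "Suc k \<le> b"
    "cascade_raise (Suc (Suc k)) y = (b choose Suc (Suc k)) + cascade_raise (Suc k) y'"
proof -
  obtain r where y: "y = (cascade_top (Suc k) y choose Suc k) + r"
    and "r < (cascade_top (Suc k) y choose k)" "Suc k \<le> cascade_top (Suc k) y"
    using cascade_top_cases[OF assms] .
  moreover have "y - (cascade_top (Suc k) y choose Suc k) = r" using y by linarith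
  then have "cascade_raise (Suc (Suc k)) y =
      (cascade_top (Suc k) y choose Suc (Suc k)) + cascade_raise (Suc k) r"
    using assms by simp
  ultimately show ?thesis using that by blast
qed

lemma le_cascade_raise_step:
  assumes IH: "\<And>x' y'. (k = 0 \<longrightarrow> y' = 0) \<Longrightarrow> kk (Suc k) x' \<le> y' \<Longrightarrow>
      x' \<le> cascade_raise (Suc k) y'"
    and le: "kk (Suc (Suc k)) x \<le> y"
  shows "x \<le> cascade_raise (Suc (Suc k)) y"
proof (cases "x = 0")
  case False
  then obtain a x' where x: "x = (a choose Suc (Suc k)) + x'" and x': "x' < (a choose Suc k)"
    and a: "Suc (Suc k) \<le> a" and kk_x: "kk (Suc (Suc k)) x = (a choose Suc k) + kk (Suc k) x'"
    using kk_Suc_cases[of x "Suc k"] by auto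
  have "0 < (a choose Suc k)" using a by simp
  then have "0 < y" using le kk_x by linarith
  then obtain b y' where y: "y = (b choose Suc k) + y'" and y': "y' < (b choose k)"
    and raise_y: "cascade_raise (Suc (Suc k)) y = (b choose Suc (Suc k)) + cascade_raise (Suc k) y'"
    by (rule cascade_raise_Suc_Suc)
  have "a \<le> b"
  proof (rule ccontr)
    assume "\<not> a \<le> b"
    then have "(Suc b choose Suc k) \<le> (a choose Suc k)" by (intro binomial_right_mono) simp
    then show False using le kk_x y y' by simp
  qed
  show ?thesis
  proof (cases "a = b")
    case False
    then have "(Suc a choose Suc (Suc k)) \<le> (b choose Suc (Suc k))"
      using \<open>a \<le> b\<close> by (intro binomial_right_mono) simp
    then show ?thesis using raise_y x x' by simp
  next
    case True
    have "k = 0 \<longrightarrow> y' = 0" using y' by auto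
    moreover have "kk (Suc k) x' \<le> y'" using le kk_x y unfolding True by linarith
    ultimately have "x' \<le> cascade_raise (Suc k) y'" by (rule IH)
    then show ?thesis using x raise_y True by simp
  qed
qed simp

lemma le_cascade_raise: "kk (Suc (Suc k)) x \<le> y \<Longrightarrow> x \<le> cascade_raise (Suc (Suc k)) y"
proof (induction k arbitrary: x y)
  case 0
  show ?case
  proof (rule le_cascade_raise_step[OF _ 0])
    fix x' y' :: nat
    assume "(0::nat) = 0 \<longrightarrow> y' = 0" "kk (Suc 0) x' \<le> y'"
    then show "x' \<le> cascade_raise (Suc 0) y'" by (cases "x' = 0") auto
  qed
next
  case (Suc k)
  show ?case by (rule le_cascade_raise_step[OF Suc.IH Suc.prems])
qed

lemma cascade_raise_less:
  "Suc k \<le> b \<Longrightarrow> y < (b choose k) \<Longrightarrow> cascade_raise (Suc k) y < (b choose Suc k)"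
proof (induction k arbitrary: b y)
  case (Suc k b y)
  show ?case
  proof (cases "y = 0")
    case False
    then have "0 < y" by simp
    then obtain c y' where y: "y = (c choose Suc k) + y'" and y': "y' < (c choose k)"
      and c: "Suc k \<le> c"
      and raise_y: "cascade_raise (Suc (Suc k)) y = (c choose Suc (Suc k)) + cascade_raise (Suc k) y'"
      by (rule cascade_raise_Suc_Suc)
    have "c < b"
    proof (rule ccontr)
      assume "\<not> c < b"
      then have "(b choose Suc k) \<le> (c choose Suc k)" by (intro binomial_right_mono) simp
      then show False using y Suc.prems by linarith
    qed
    have "cascade_raise (Suc (Suc k)) y < (Suc c choose Suc (Suc k))"
      using Suc.IH[OF c y'] raise_y by simp
    also have "\<dots> \<le> (b choose Suc (Suc k))"
      using binomial_right_mono[of "Suc c" b "Suc (Suc k)"] \<open>c < b\<close> by simp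
    finally show ?thesis .
  qed (use Suc.prems in simp)
qed simp

lemma kk_cascade_raise_add: "kk (Suc k) (cascade_raise (Suc k) y + y) \<le> y + kk k y"
proof (induction k arbitrary: y)
  case (Suc k y)
  show ?case
  proof (cases "y = 0")
    case False
    then have "0 < y" by simp
    then obtain b y' where y: "y = (b choose Suc k) + y'" and y': "y' < (b choose k)"
      and b: "Suc k \<le> b"
      and raise_y: "cascade_raise (Suc (Suc k)) y = (b choose Suc (Suc k)) + cascade_raise (Suc k) y'"
      by (rule cascade_raise_Suc_Suc)
    define z where "z = cascade_raise (Suc k) y' + y'"
    have "cascade_raise (Suc (Suc k)) y + y = (Suc b choose Suc (Suc k)) + z"
      using raise_y y z_def by simp
    moreover have "z < (Suc b choose Suc k)"
      using cascade_raise_less[OF b y'] y' z_def by simp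
    ultimately have "kk (Suc (Suc k)) (cascade_raise (Suc (Suc k)) y + y) =
        (Suc b choose Suc k) + kk (Suc k) z"
      using kk_Suc_binomial_add[of z "Suc b" "Suc k"] b by simp
    moreover have "kk (Suc k) y = (b choose k) + kk k y'"
      using kk_Suc_binomial_add[OF y'] b y by simp
    moreover have "kk (Suc k) z \<le> y' + kk k y'" using Suc.IH[of y'] z_def by simp
    ultimately show ?thesis using y by simp
  qed simp
qed simp

lemma kk_add_le: "kk (Suc k) x \<le> y \<Longrightarrow> kk (Suc k) (x + y) \<le> y + kk k y"
proof (cases k)
  case 0
  then show "kk (Suc k) x \<le> y \<Longrightarrow> ?thesis" by (cases "x = 0"; cases "y = 0") auto
next
  case (Suc k')
  assume "kk (Suc k) x \<le> y"
  then have "x \<le> cascade_raise (Suc k) y" using le_cascade_raise[of k' x y] Suc by simp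
  then have "kk (Suc k) (x + y) \<le> kk (Suc k) (cascade_raise (Suc k) y + y)" by (intro kk_mono) simp
  also have "\<dots> \<le> y + kk k y" by (rule kk_cascade_raise_add)
  finally show ?thesis .
qed

section \<open>Shadows and the Kruskal--Katona theorem\<close>

definition shadow :: "'a set set \<Rightarrow> 'a set set" where
  "shadow A = {F - {x} | F x. F \<in> A \<and> x \<in> F}"

lemma shadow_eq_UN: "shadow A = (\<Union>F\<in>A. (\<lambda>x. F - {x}) ` F)"
  unfolding shadow_def by blast

lemma finite_shadow: "finite A \<Longrightarrow> \<forall>F\<in>A. finite F \<Longrightarrow> finite (shadow A)"
  unfolding shadow_eq_UN by auto

definition shift_set :: "'a \<Rightarrow> 'a \<Rightarrow> 'a set set \<Rightarrow> 'a set \<Rightarrow> 'a set" where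
  "shift_set x u A F =
     (if x \<in> F \<and> u \<notin> F \<and> insert u (F - {x}) \<notin> A then insert u (F - {x}) else F)"

definition shift :: "'a \<Rightarrow> 'a \<Rightarrow> 'a set set \<Rightarrow> 'a set set" where
  "shift x u A = shift_set x u A ` A"

lemma shift_set_eq_self:
  "\<not> (x \<in> F \<and> u \<notin> F \<and> insert u (F - {x}) \<notin> A) \<Longrightarrow> shift_set x u A F = F"
  unfolding shift_set_def by (rule if_not_P)

lemma inj_on_shift_set: "inj_on (shift_set x u A) A"
proof (rule inj_onI)
  fix F G assume "F \<in> A" "G \<in> A" and eq: "shift_set x u A F = shift_set x u A G"
  consider "x \<in> F" "u \<notin> F" "insert u (F - {x}) \<notin> A" "x \<in> G" "u \<notin> G" "insert u (G - {x}) \<notin> A"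
    | "\<not> (x \<in> F \<and> u \<notin> F \<and> insert u (F - {x}) \<notin> A)"
      "\<not> (x \<in> G \<and> u \<notin> G \<and> insert u (G - {x}) \<notin> A)"
    | "x \<in> F \<and> u \<notin> F \<and> insert u (F - {x}) \<notin> A \<longleftrightarrow>
       \<not> (x \<in> G \<and> u \<notin> G \<and> insert u (G - {x}) \<notin> A)"
    by blast
  then show "F = G"
  proof cases
    case 1
    then have "insert u (F - {x}) - {u} = insert u (G - {x}) - {u}"
      using eq by (simp add: shift_set_def)
    then have "F - {x} = G - {x}" using 1 by (simp add: Diff_insert_absorb)
    then show ?thesis using 1 by blast
  next
    case 2
    then show ?thesis using eq by (simp add: shift_set_eq_self)
  next
    case 3
    then show ?thesis using eq \<open>F \<in> A\<close> \<open>G \<in> A\<close> by (auto simp: shift_set_def split: if_splits)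
  qed
qed

lemma card_shift: "card (shift x u A) = card A"
  unfolding shift_def by (rule card_image[OF inj_on_shift_set])

lemma shift_memI: "G \<in> A \<Longrightarrow> shift_set x u A G = H \<Longrightarrow> H \<in> shift x u A"
  unfolding shift_def by blast

lemma shadow_of_fixed_in_shift:
  assumes F: "F \<in> A" "\<not> (x \<in> F \<and> u \<notin> F \<and> insert u (F - {x}) \<notin> A)" and y: "y \<in> F"
  shows "F - {y} \<in> shift x u (shadow A)"
proof (rule shift_memI)
  show "F - {y} \<in> shadow A" using F(1) y unfolding shadow_def by blast
  show "shift_set x u (shadow A) (F - {y}) = F - {y}"
  proof (rule shift_set_eq_self, rule notI)
    assume c: "x \<in> F - {y} \<and> u \<notin> F - {y} \<and> insert u (F - {y} - {x}) \<notin> shadow A"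
    have "insert u (F - {y} - {x}) \<in> shadow A"
    proof (cases "u = y")
      case True
      then have "insert u (F - {y} - {x}) = F - {x}" using c y by auto
      then show ?thesis using F(1) c unfolding shadow_def by blast
    next
      case False
      then have "insert u (F - {x}) \<in> A" using F(2) c by blast
      moreover have "insert u (F - {y} - {x}) = insert u (F - {x}) - {y}"
        "y \<in> insert u (F - {x})"
        using c y False by auto
      ultimately show ?thesis unfolding shadow_def by blast
    qed
    then show False using c by blast
  qed
qed

lemma shadow_of_moved_in_shift:
  assumes F: "F \<in> A" "x \<in> F" "u \<notin> F" "insert u (F - {x}) \<notin> A"
    and y: "y \<in> insert u (F - {x})"
  shows "insert u (F - {x}) - {y} \<in> shift x u (shadow A)"
proof (cases "y = u")
  case True
  then have G: "insert u (F - {x}) - {y} = F - {x}" using F(3) by auto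
  show ?thesis
  proof (rule shift_memI)
    show "F - {x} \<in> shadow A" using F(1,2) unfolding shadow_def by blast
    show "shift_set x u (shadow A) (F - {x}) = insert u (F - {x}) - {y}"
      unfolding G by (simp add: shift_set_def)
  qed
next
  case False
  then have "y \<in> F" "y \<noteq> x" and G: "insert u (F - {x}) - {y} = insert u (F - {y} - {x})"
    using y by auto
  show ?thesis
  proof (cases "insert u (F - {y} - {x}) \<in> shadow A")
    case True
    then show ?thesis unfolding G by (rule shift_memI) (simp add: shift_set_def)
  next
    case False
    show ?thesis
    proof (rule shift_memI)
      show "F - {y} \<in> shadow A" using F(1) \<open>y \<in> F\<close> unfolding shadow_def by blast
      show "shift_set x u (shadow A) (F - {y}) = insert u (F - {x}) - {y}"
        using False F(2,3) \<open>y \<noteq> x\<close> unfolding G shift_set_def by auto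
    qed
  qed
qed

lemma shadow_shift_subset: "shadow (shift x u A) \<subseteq> shift x u (shadow A)"
proof
  fix G assume "G \<in> shadow (shift x u A)"
  then obtain F y where F: "F \<in> A" and y: "y \<in> shift_set x u A F"
    and G: "G = shift_set x u A F - {y}"
    unfolding shadow_def shift_def by blast
  show "G \<in> shift x u (shadow A)"
  proof (cases "x \<in> F \<and> u \<notin> F \<and> insert u (F - {x}) \<notin> A")
    case True
    then show ?thesis
      using shadow_of_moved_in_shift[OF F] y G by (simp add: shift_set_def)
  next
    case False
    then show ?thesis
      using shadow_of_fixed_in_shift[OF F False] y G by (simp add: shift_set_eq_self)
  qed
qed

lemma card_shadow_shift_le:
  assumes "finite A" "\<forall>F\<in>A. finite F"
  shows "card (shadow (shift x u A)) \<le> card (shadow A)"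
proof -
  have "finite (shift x u (shadow A))"
    unfolding shift_def using finite_shadow[OF assms] by simp
  then have "card (shadow (shift x u A)) \<le> card (shift x u (shadow A))"
    using shadow_shift_subset by (rule card_mono)
  also have "\<dots> = card (shadow A)" by (rule card_shift)
  finally show ?thesis .
qed

lemma card_shift_avoiding_less:
  assumes "finite A" "F0 \<in> A" "x \<in> F0" "u \<notin> F0" "insert u (F0 - {x}) \<notin> A"
  shows "card {G \<in> shift x u A. u \<notin> G} < card {F \<in> A. u \<notin> F}"
proof -
  have "{G \<in> shift x u A. u \<notin> G} \<subseteq> {F \<in> A. u \<notin> F} - {F0}"
    using assms(2-5) unfolding shift_def shift_set_def by (auto split: if_splits)
  then have "card {G \<in> shift x u A. u \<notin> G} \<le> card ({F \<in> A. u \<notin> F} - {F0})"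
    using assms(1) by (intro card_mono) auto
  also have "\<dots> < card {F \<in> A. u \<notin> F}"
    using assms by (intro card_Diff1_less) auto
  finally show ?thesis .
qed

lemma shift_subset_uniform:
  assumes "u \<in> V" "finite V" "A \<subseteq> {F. F \<subseteq> V \<and> card F = k}"
  shows "shift x u A \<subseteq> {F. F \<subseteq> V \<and> card F = k}"
proof
  fix G assume "G \<in> shift x u A"
  then obtain F where F: "F \<in> A" "G = shift_set x u A F" unfolding shift_def by blast
  have "F \<subseteq> V" "card F = k" using F assms by auto
  have "finite F" using \<open>F \<subseteq> V\<close> assms(2) finite_subset by blast
  show "G \<in> {F. F \<subseteq> V \<and> card F = k}"
  proof (cases "x \<in> F \<and> u \<notin> F \<and> insert u (F - {x}) \<notin> A")
    case True
    then have "card (insert u (F - {x})) = card F"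
      using \<open>finite F\<close> card_Suc_Diff1[OF \<open>finite F\<close>, of x] by simp
    then show ?thesis using F True \<open>F \<subseteq> V\<close> \<open>card F = k\<close> assms(1)
      by (auto simp: shift_set_def)
  qed (use F \<open>F \<subseteq> V\<close> \<open>card F = k\<close> in \<open>simp add: shift_set_eq_self\<close>)
qed

definition shifted :: "'a \<Rightarrow> 'a set set \<Rightarrow> bool" where
  "shifted u B \<longleftrightarrow> (\<forall>F\<in>B. \<forall>x\<in>F. u \<notin> F \<longrightarrow> insert u (F - {x}) \<in> B)"

text \<open>Repeated shifting towards \<open>u\<close> terminates because each effective shift
  strictly decreases the number of members avoiding \<open>u\<close>.\<close>
lemma exists_shifted_family:
  assumes "finite V" "u \<in> V" "A \<subseteq> {F. F \<subseteq> V \<and> card F = k}"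
  obtains B where "B \<subseteq> {F. F \<subseteq> V \<and> card F = k}" "card B = card A"
    "card (shadow B) \<le> card (shadow A)" "shifted u B"
proof -
  have "\<exists>B. B \<subseteq> {F. F \<subseteq> V \<and> card F = k} \<and> card B = card A \<and>
      card (shadow B) \<le> card (shadow A) \<and> shifted u B"
    using assms(3)
  proof (induction "card {F\<in>A. u \<notin> F}" arbitrary: A rule: less_induct)
    case (less A)
    have "A \<subseteq> Pow V" using less.prems by auto
    then have "finite A" using assms(1) by (simp add: finite_subset)
    have "\<forall>F\<in>A. finite F" using less.prems assms(1) by (auto intro: finite_subset)
    show ?case
    proof (cases "shifted u A")
      case False
      then obtain F0 x where F0: "F0 \<in> A" "x \<in> F0" "u \<notin> F0" "insert u (F0 - {x}) \<notin> A"
        unfolding shifted_def by blast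
      have "card {F\<in>shift x u A. u \<notin> F} < card {F\<in>A. u \<notin> F}"
        by (rule card_shift_avoiding_less[OF \<open>finite A\<close> F0])
      moreover have "shift x u A \<subseteq> {F. F \<subseteq> V \<and> card F = k}"
        by (rule shift_subset_uniform[OF assms(2,1) less.prems])
      ultimately obtain B where "B \<subseteq> {F. F \<subseteq> V \<and> card F = k}" "card B = card (shift x u A)"
        "card (shadow B) \<le> card (shadow (shift x u A))" "shifted u B"
        by (elim less.hyps[elim_format] exE conjE)
      then show ?thesis
        using card_shift[of x u A] card_shadow_shift_le[OF \<open>finite A\<close> \<open>\<forall>F\<in>A. finite F\<close>, of x u]
        by (intro exI[of _ B]) simp
    qed (use less.prems in \<open>intro exI[of _ A], simp\<close>)
  qed
  then show ?thesis using that by blast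
qed

definition deletion :: "'a \<Rightarrow> 'a set set \<Rightarrow> 'a set set" where
  "deletion u B = {F \<in> B. u \<notin> F}"

definition link :: "'a \<Rightarrow> 'a set set \<Rightarrow> 'a set set" where
  "link u B = (\<lambda>F. F - {u}) ` {F \<in> B. u \<in> F}"

lemma card_deletion_add_link:
  assumes "finite B"
  shows "card B = card (deletion u B) + card (link u B)"
proof -
  have "inj_on (\<lambda>F. F - {u}) {F \<in> B. u \<in> F}"
  proof (rule inj_onI)
    fix F G assume "F \<in> {F \<in> B. u \<in> F}" "G \<in> {F \<in> B. u \<in> F}" and eq: "F - {u} = G - {u}"
    then have "u \<in> F" "u \<in> G" by simp_all
    then show "F = G" using eq by (metis insert_Diff)
  qed
  then have "card (link u B) = card {F \<in> B. u \<in> F}"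
    unfolding link_def by (rule card_image)
  moreover have "card (deletion u B \<union> {F \<in> B. u \<in> F}) =
      card (deletion u B) + card {F \<in> B. u \<in> F}"
    using assms by (intro card_Un_disjoint) (auto simp: deletion_def)
  moreover have "deletion u B \<union> {F \<in> B. u \<in> F} = B" unfolding deletion_def by auto
  ultimately show ?thesis by simp
qed

lemma shadow_deletion_subset_link: "shifted u B \<Longrightarrow> shadow (deletion u B) \<subseteq> link u B"
proof
  fix G assume "shifted u B" "G \<in> shadow (deletion u B)"
  then obtain F y where F: "F \<in> B" "u \<notin> F" "y \<in> F" "G = F - {y}"
    unfolding shadow_def deletion_def by blast
  then have "insert u (F - {y}) \<in> {F \<in> B. u \<in> F}"
    using \<open>shifted u B\<close> unfolding shifted_def by blast
  moreover have "G = insert u (F - {y}) - {u}" using F by auto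
  ultimately show "G \<in> link u B" unfolding link_def by blast
qed

text \<open>The faces of \<open>B\<close> through \<open>u\<close> contribute two disjoint parts to its shadow:
  the link itself (drop \<open>u\<close>) and the shadow of the link with \<open>u\<close> put back.\<close>
lemma card_link_add_card_shadow_link_le:
  assumes "finite B" "\<forall>F\<in>B. finite F"
  shows "card (link u B) + card (shadow (link u B)) \<le> card (shadow B)"
proof -
  have fin_link: "finite (link u B)" using assms(1) unfolding link_def by simp
  have fin_shadow_link: "finite (shadow (link u B))"
    by (rule finite_shadow[OF fin_link]) (use assms(2) in \<open>auto simp: link_def\<close>)
  have "u \<notin> G" if "G \<in> shadow (link u B)" for G
    using that unfolding shadow_def link_def by auto
  then have "card (insert u ` shadow (link u B)) = card (shadow (link u B))"
    by (intro card_image inj_onI) (metis Diff_insert_absorb)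
  moreover have "link u B \<inter> insert u ` shadow (link u B) = {}"
    unfolding link_def by auto
  moreover have "link u B \<union> insert u ` shadow (link u B) \<subseteq> shadow B"
  proof (intro Un_least subsetI)
    fix G assume "G \<in> link u B"
    then show "G \<in> shadow B" unfolding link_def shadow_def by blast
  next
    fix G assume "G \<in> insert u ` shadow (link u B)"
    then obtain F y where "F \<in> B" "u \<in> F" "y \<in> F - {u}" "G = insert u (F - {u} - {y})"
      unfolding shadow_def link_def by blast
    then have "G = F - {y}" "y \<in> F" by auto
    then show "G \<in> shadow B" using \<open>F \<in> B\<close> unfolding shadow_def by blast
  qed
  then have "card (link u B \<union> insert u ` shadow (link u B)) \<le> card (shadow B)"
    by (rule card_mono[OF finite_shadow[OF assms]])
  ultimately show ?thesis
    using fin_link fin_shadow_link by (simp add: card_Un_disjoint)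
qed

lemma kruskal_katona_subsets:
  assumes "finite V" "A \<subseteq> {F. F \<subseteq> V \<and> card F = k}"
  shows "kk k (card A) \<le> card (shadow A)"
  using assms
proof (induction V arbitrary: k A rule: finite_induct)
  case empty
  show ?case
  proof (cases k)
    case (Suc j)
    then have "A = {}" using empty.prems by auto
    then show ?thesis by simp
  qed simp
next
  case (insert u V)
  show ?case
  proof (cases k)
    case (Suc j)
    obtain B where B: "B \<subseteq> {F. F \<subseteq> insert u V \<and> card F = k}" "card B = card A"
      "card (shadow B) \<le> card (shadow A)" "shifted u B"
      using exists_shifted_family[OF _ _ insert.prems] insert.hyps(1) by blast
    have "B \<subseteq> Pow (insert u V)" using B(1) by auto
    then have "finite B" using insert.hyps(1) by (simp add: finite_subset)
    have finite_faces: "\<forall>F\<in>B. finite F" using B(1) insert.hyps(1) by (auto intro: finite_subset)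
    have "deletion u B \<subseteq> {F. F \<subseteq> V \<and> card F = k}"
      using B(1) unfolding deletion_def by auto
    then have IH_deletion: "kk k (card (deletion u B)) \<le> card (shadow (deletion u B))"
      by (rule insert.IH)
    have "link u B \<subseteq> {F. F \<subseteq> V \<and> card F = j}"
      using B(1) finite_faces Suc unfolding link_def by auto
    then have IH_link: "kk j (card (link u B)) \<le> card (shadow (link u B))"
      by (rule insert.IH)
    have "card (shadow (deletion u B)) \<le> card (link u B)"
      using shadow_deletion_subset_link[OF B(4)] \<open>finite B\<close>
      by (intro card_mono) (simp_all add: link_def)
    then have "kk (Suc j) (card (deletion u B)) \<le> card (link u B)"
      using IH_deletion Suc by simp
    then have "kk (Suc j) (card (deletion u B) + card (link u B)) \<le>
        card (link u B) + kk j (card (link u B))"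
      by (rule kk_add_le)
    then have "kk k (card A) \<le> card (link u B) + kk j (card (link u B))"
      using card_deletion_add_link[OF \<open>finite B\<close>, of u] B(2) Suc by simp
    also have "\<dots> \<le> card (shadow A)"
      using IH_link card_link_add_card_shadow_link_le[OF \<open>finite B\<close> finite_faces, of u] B(3)
      by linarith
    finally show ?thesis .
  qed simp
qed

theorem kruskal_katona:
  assumes "finite A" "\<forall>F\<in>A. finite F \<and> card F = k"
  shows "kk k (card A) \<le> card (shadow A)"
  by (rule kruskal_katona_subsets[of "\<Union>A"]) (use assms in auto)

section \<open>Binomial expansions\<close>

lemma binom_expansion_index_le:
  assumes "j \<le> a j" "\<forall>t\<in>{j..<k}. a t < a (Suc t)" "j \<le> t" "t \<le> k"
  shows "t \<le> a t"
  using assms(3,4)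
proof (induction t)
  case (Suc t)
  show ?case
  proof (cases "j = Suc t")
    case False
    then have "j \<le> t" "t \<in> {j..<k}" using Suc.prems by auto
    then show ?thesis using Suc.IH assms(2) Suc.prems by fastforce
  qed (use assms(1) in simp)
qed simp

lemma binom_expansion_sum_less:
  assumes "1 \<le> j" "j \<le> a j" "\<forall>t\<in>{j..<k}. a t < a (Suc t)" "j \<le> k"
  shows "(\<Sum>t=j..k. a t choose t) < (Suc (a k) choose k)"
  using assms
proof (induction k)
  case (Suc k)
  show ?case
  proof (cases "j = Suc k")
    case False
    then have "j \<le> k" using Suc.prems by simp
    then have "(\<Sum>t=j..k. a t choose t) < (Suc (a k) choose k)"
      using Suc.IH Suc.prems(1-3) by simp
    moreover have "(Suc (a k) choose k) \<le> (a (Suc k) choose k)"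
      using Suc.prems(3) \<open>j \<le> k\<close> by (intro binomial_right_mono) (simp add: Suc_le_eq)
    ultimately show ?thesis using Suc.prems(4) by simp
  qed (use Suc.prems in simp)
qed simp

lemma binom_expansion_sum_eq_kk:
  "binom_expansion k m j a \<Longrightarrow> (\<Sum>t=j..k. a t choose (t - 1)) = kk k m"
proof (induction k arbitrary: m)
  case 0
  then show ?case by (auto simp: binom_expansion_def)
next
  case (Suc k m)
  have j: "1 \<le> j" "j \<le> Suc k" "j \<le> a j" and inc: "\<forall>t\<in>{j..<Suc k}. a t < a (Suc t)"
    and m: "m = (\<Sum>t=j..Suc k. a t choose t)"
    using Suc.prems unfolding binom_expansion_def by auto
  have "Suc k \<le> a (Suc k)" using binom_expansion_index_le[OF j(3) inc, of "Suc k"] j(2) by simp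
  show ?case
  proof (cases "j = Suc k")
    case True
    then have "m = (a (Suc k) choose Suc k) + 0" using m by simp
    then show ?thesis
      using kk_Suc_binomial_add[of 0 "a (Suc k)" k] \<open>Suc k \<le> a (Suc k)\<close> True by simp
  next
    case False
    then have "j \<le> k" using j(2) by simp
    define r where "r = (\<Sum>t=j..k. a t choose t)"
    have inc': "\<forall>t\<in>{j..<k}. a t < a (Suc t)" using inc by auto
    have "r < (Suc (a k) choose k)"
      unfolding r_def by (rule binom_expansion_sum_less[OF j(1,3) inc' \<open>j \<le> k\<close>])
    also have "\<dots> \<le> (a (Suc k) choose k)"
      using inc \<open>j \<le> k\<close> by (intro binomial_right_mono) (simp add: Suc_le_eq)
    finally have "kk (Suc k) ((a (Suc k) choose Suc k) + r) = (a (Suc k) choose k) + kk k r"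
      by (rule kk_Suc_binomial_add) (use \<open>Suc k \<le> a (Suc k)\<close> in simp)
    moreover have "binom_expansion k r j a"
      unfolding binom_expansion_def using j(1,3) \<open>j \<le> k\<close> inc' r_def by simp
    moreover have "m = (a (Suc k) choose Suc k) + r" using m \<open>j \<le> k\<close> r_def by simp
    moreover have "(\<Sum>t=j..Suc k. a t choose (t - 1)) =
        (a (Suc k) choose k) + (\<Sum>t=j..k. a t choose (t - 1))"
      using j(2) by simp
    ultimately show ?thesis using Suc.IH by simp
  qed
qed

lemma binom_expansion_exists: "1 \<le> k \<Longrightarrow> 0 < m \<Longrightarrow> \<exists>j a. binom_expansion k m j a"
proof (induction k arbitrary: m)
  case (Suc k m)
  obtain b r where m: "m = (b choose Suc k) + r" and r: "r < (b choose k)" and b: "Suc k \<le> b"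
    using kk_Suc_cases[OF Suc.prems(2)] by blast
  show ?case
  proof (cases "r = 0")
    case True
    then have "binom_expansion (Suc k) m (Suc k) (\<lambda>_. b)"
      unfolding binom_expansion_def using m b by simp
    then show ?thesis by blast
  next
    case False
    then have "1 \<le> k" using r by (cases k) auto
    then obtain j a where "binom_expansion k r j a" using Suc.IH False by blast
    then have j: "1 \<le> j" "j \<le> k" "j \<le> a j" and inc: "\<forall>t\<in>{j..<k}. a t < a (Suc t)"
      and r_sum: "r = (\<Sum>t=j..k. a t choose t)"
      unfolding binom_expansion_def by auto
    have "(a k choose k) \<le> r" unfolding r_sum by (rule member_le_sum) (use j in auto)
    have "a k < b"
    proof (rule ccontr)
      assume "\<not> a k < b"
      then have "(b choose k) \<le> (a k choose k)" by (simp add: binomial_right_mono)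
      then show False using \<open>(a k choose k) \<le> r\<close> r by simp
    qed
    define a' where "a' = a(Suc k := b)"
    have "\<forall>t\<in>{j..<Suc k}. a' t < a' (Suc t)"
      using inc \<open>a k < b\<close> unfolding a'_def by (auto simp: less_Suc_eq)
    moreover have "(\<Sum>t=j..k. a' t choose t) = (\<Sum>t=j..k. a t choose t)"
      by (rule sum.cong) (auto simp: a'_def)
    then have "m = (\<Sum>t=j..Suc k. a' t choose t)"
      using m r_sum j a'_def by simp
    ultimately have "binom_expansion (Suc k) m j a'"
      unfolding binom_expansion_def using j a'_def by simp
    then show ?thesis by blast
  qed
qed simp

lemma mu_eq_kk:
  assumes "1 \<le> k"
  shows "mu k m = kk k m"
proof (cases "m = 0")
  case False
  then obtain j a where expansion: "binom_expansion k m j a"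
    using binom_expansion_exists[OF assms] by blast
  have "(THE s. \<exists>j a. binom_expansion k m j a \<and> s = (\<Sum>t=j..k. a t choose (t - 1))) = kk k m"
  proof (rule the_equality)
    show "\<exists>j a. binom_expansion k m j a \<and> kk k m = (\<Sum>t=j..k. a t choose (t - 1))"
      using expansion binom_expansion_sum_eq_kk[OF expansion] by metis
  qed (use binom_expansion_sum_eq_kk in blast)
  then show ?thesis using False by (simp add: mu_def)
qed (simp add: mu_def)

section \<open>Marked faces\<close>

text \<open>A face together with at most one marked vertex, encoded as a set of
  vertex--flag pairs so that it has the same size as the face.\<close>
definition mark :: "'a set \<Rightarrow> 'a option \<Rightarrow> ('a \<times> bool) set" where
  "mark F w = (\<lambda>x. (x, w = Some x)) ` F"

definition marks :: "'a set \<Rightarrow> 'a option set" where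
  "marks F = insert None (Some ` F)"

definition marked :: "'a set set \<Rightarrow> ('a \<times> bool) set set" where
  "marked A = (\<lambda>(F, w). mark F w) ` (SIGMA F:A. marks F)"

lemma card_marks: "finite F \<Longrightarrow> card (marks F) = Suc (card F)"
  unfolding marks_def by (simp add: card_image)

lemma finite_mark: "finite F \<Longrightarrow> finite (mark F w)"
  unfolding mark_def by simp

lemma card_mark: "card (mark F w) = card F"
  unfolding mark_def by (rule card_image) (simp add: inj_on_def)

lemma fst_image_mark: "fst ` mark F w = F"
  unfolding mark_def by (simp add: image_image)

lemma marked_vertices_mark: "w \<in> marks F \<Longrightarrow> {x. (x, True) \<in> mark F w} = set_option w"
  unfolding marks_def mark_def by auto

lemma inj_on_mark: "inj_on (\<lambda>(F, w). mark F w) (SIGMA F:A. marks F)"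
proof (rule inj_onI, clarify)
  fix F w G w' assume w: "w \<in> marks F" and w': "w' \<in> marks G" and eq: "mark F w = mark G w'"
  have "F = G" using fst_image_mark[of F w] fst_image_mark[of G w'] eq by simp
  moreover have "set_option w = set_option w'"
    using marked_vertices_mark[OF w] marked_vertices_mark[OF w'] eq by simp
  then have "w = w'" by (cases w; cases w') auto
  ultimately show "F = G \<and> w = w'" by simp
qed

lemma card_marked:
  assumes "finite A" "\<forall>F\<in>A. finite F"
  shows "card (marked A) = (\<Sum>F\<in>A. Suc (card F))"
proof -
  have "card (marked A) = card (SIGMA F:A. marks F)"
    unfolding marked_def by (rule card_image[OF inj_on_mark])
  also have "\<dots> = (\<Sum>F\<in>A. card (marks F))"
    using assms by (intro card_SigmaI) (simp_all add: marks_def)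
  also have "\<dots> = (\<Sum>F\<in>A. Suc (card F))"
    using assms(2) by (simp add: card_marks)
  finally show ?thesis .
qed

text \<open>Removing a vertex from a marked face leaves a marked face; if the removed
  vertex was the marked one, the result is unmarked.\<close>
lemma shadow_marked_subset: "shadow (marked A) \<subseteq> marked (shadow A)"
proof
  fix H assume "H \<in> shadow (marked A)"
  then obtain F w y where F: "F \<in> A" and w: "w \<in> marks F" and y: "y \<in> F"
    and H: "H = mark F w - {(y, w = Some y)}"
    unfolding shadow_def marked_def mark_def by auto
  define w' where "w' = (if w = Some y then None else w)"
  have "H = mark (F - {y}) w'"
    unfolding H mark_def w'_def by auto
  moreover have "F - {y} \<in> shadow A" using F y unfolding shadow_def by blast
  moreover have "w' \<in> marks (F - {y})" using w unfolding w'_def marks_def by auto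
  ultimately show "H \<in> marked (shadow A)" unfolding marked_def by blast
qed

lemma kk_mult_card_le_mult_card_shadow:
  assumes "finite A" "\<forall>F\<in>A. finite F \<and> card F = k"
  shows "kk k ((k + 1) * card A) \<le> k * card (shadow A)"
proof -
  have finite_faces: "\<forall>F\<in>A. finite F" using assms(2) by blast
  have shadow_faces: "finite G \<and> Suc (card G) = k" if G: "G \<in> shadow A" for G
  proof -
    obtain F x where "F \<in> A" "x \<in> F" "G = F - {x}" using G unfolding shadow_def by blast
    then show ?thesis using assms(2) card_Suc_Diff1[of F x] by auto
  qed
  have finite_shadow_A: "finite (shadow A)" by (rule finite_shadow[OF assms(1) finite_faces])
  have "finite (marked A)"
    using assms(1) finite_faces unfolding marked_def marks_def by simp
  moreover have "\<forall>H\<in>marked A. finite H \<and> card H = k"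
    using assms(2) unfolding marked_def by (auto simp: card_mark finite_mark)
  ultimately have kk_marked: "kk k (card (marked A)) \<le> card (shadow (marked A))"
    by (rule kruskal_katona)
  have "kk k ((k + 1) * card A) = kk k (card (marked A))"
    using card_marked[OF assms(1) finite_faces] assms(2) by (simp add: mult.commute)
  also have "\<dots> \<le> card (shadow (marked A))" by (rule kk_marked)
  also have "\<dots> \<le> card (marked (shadow A))"
    using shadow_marked_subset finite_shadow_A shadow_faces
    by (intro card_mono) (simp_all add: marked_def marks_def)
  also have "\<dots> = k * card (shadow A)"
    using card_marked[OF finite_shadow_A] shadow_faces by simp
  finally show ?thesis .
qed

theorem corollary3p8:
  fixes K :: "'a set set" and d i :: nat
  assumes "simplicial_complex K"
    and "\<forall>F\<in>K. card F \<le> d"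
    and "1 \<le> i" and "i \<le> d - 1"
  shows "mu (i + 1) ((i + 2) * fvec K (int i)) \<le> (i + 1) * fvec K (int i - 1)"
proof -
  have "finite K" "\<forall>F\<in>K. finite F" and down_closed: "\<forall>F\<in>K. \<forall>G. G \<subseteq> F \<longrightarrow> G \<in> K"
    using assms(1) unfolding simplicial_complex_def by auto
  define A where "A = {F \<in> K. card F = i + 1}"
  have f_i: "fvec K (int i) = card A" and f_i_minus_1: "fvec K (int i - 1) = card {G \<in> K. card G = i}"
    unfolding fvec_def A_def by (rule arg_cong[where f = card], fastforce)+
  have "shadow A \<subseteq> {G \<in> K. card G = i}"
  proof
    fix G assume "G \<in> shadow A"
    then obtain F y where "F \<in> K" "card F = i + 1" "y \<in> F" "G = F - {y}"
      unfolding shadow_def A_def by blast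
    then show "G \<in> {G \<in> K. card G = i}" using down_closed by auto
  qed
  then have card_shadow: "card (shadow A) \<le> card {G \<in> K. card G = i}"
    using \<open>finite K\<close> by (intro card_mono) simp_all
  have "finite A" "\<forall>F\<in>A. finite F \<and> card F = i + 1"
    using \<open>finite K\<close> \<open>\<forall>F\<in>K. finite F\<close> unfolding A_def by simp_all
  then have kk_bound: "kk (i + 1) ((i + 1 + 1) * card A) \<le> (i + 1) * card (shadow A)"
    by (rule kk_mult_card_le_mult_card_shadow)
  have "mu (i + 1) ((i + 2) * fvec K (int i)) = kk (i + 1) ((i + 1 + 1) * card A)"
    using f_i mu_eq_kk[of "i + 1"] by simp
  also have "\<dots> \<le> (i + 1) * card (shadow A)" by (rule kk_bound)
  also have "\<dots> \<le> (i + 1) * fvec K (int i - 1)"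
    unfolding f_i_minus_1 using card_shadow by (rule mult_le_mono2)
  finally show ?thesis .
qed

end
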